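(* Let $P$ be an $n\times n$ sign pattern and $A\in\mathcal{Q}(P)$. If $A$ has the nSSP, then for every superpattern $P'$ of $P$ there exists $A'\in\mathcal{Q}(P')$ such that $A'$ is similar to $A$ and $A'$ has the nSSP.
   Context: A sign pattern is an array with entries in $\{+,-,0\}$; its qualitative class $\mathcal{Q}(P)$ is the set of real matrices of the same size whose entries have the signs prescribed by $P$. $P'$ is a superpattern of $P$ if $P'$ is obtained from $P$ by replacing some (possibly none) of its $0$ entries by $+$ or $-$. $\circ$ is the entrywise product. A real $n\times n$ matrix $A$ has the non-symmetric strong spectral property (nSSP) if $X=O$ is the only real $n\times n$ matrix with $A\circ X=O$ and $AX^\top-X^\top A=O$. *)

theory Defs
  imports "HOL-Analysis.Analysis"
begin

datatype sgn_entry = SPos | SNeg | SZero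

type_synonym 'n sign_pattern = "'n \<Rightarrow> 'n \<Rightarrow> sgn_entry"

definition has_sign :: "real \<Rightarrow> sgn_entry \<Rightarrow> bool" where
  "has_sign x s = (case s of SPos \<Rightarrow> x > 0 | SNeg \<Rightarrow> x < 0 | SZero \<Rightarrow> x = 0)"

definition qual_class :: "'n sign_pattern \<Rightarrow> (real^'n^'n) set" where
  "qual_class P = {A. \<forall>i j. has_sign (A $ i $ j) (P i j)}"

definition superpattern :: "'n sign_pattern \<Rightarrow> 'n sign_pattern \<Rightarrow> bool" where
  "superpattern P' P = (\<forall>i j. P i j \<noteq> SZero \<longrightarrow> P' i j = P i j)"

definition hadamard :: "real^'n^'m \<Rightarrow> real^'n^'m \<Rightarrow> real^'n^'m" where
  "hadamard A B = (\<chi> i j. A $ i $ j * B $ i $ j)"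

definition nSSP :: "real^'n^'n \<Rightarrow> bool" where
  "nSSP A = (\<forall>X::real^'n^'n. hadamard A X = 0 \<and> A ** transpose X - transpose X ** A = 0 \<longrightarrow> X = 0)"

definition similar_matrix :: "real^'n^'n \<Rightarrow> real^'n^'n \<Rightarrow> bool" where
  "similar_matrix A B = (\<exists>S::real^'n^'n. invertible S \<and> A = matrix_inv S ** B ** S)"

end

theory Submission
  imports Defs
begin

(* The derivative of S \<mapsto> S^-1 A S at S = I is K \<mapsto> AK - KA. Followed by restriction to the
   zero positions of A it is onto: its adjoint X \<mapsto> A^T X - X A^T, on matrices vanishing on the
   support of A, is injective precisely by the nSSP. By the open mapping theorem, the matrices
   S^-1 A S with S near I therefore realise every sufficiently small prescription of the entries at
   the zero positions of A; we prescribe small entries with the signs of P'. Near A the nonzero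
   entries keep their signs, and the nSSP persists, being an open condition among matrices whose
   support contains that of A. *)

lemma matrix_diff_rdistrib: "((X::'a::ring_1^'n^'m) - Y) ** Z = X ** Z - Y ** Z"
  by (simp add: vec_eq_iff matrix_matrix_mult_def sum_subtractf algebra_simps)

lemma matrix_diff_ldistrib: "(X::'a::ring_1^'n^'m) ** (Y - Z) = X ** Y - X ** Z"
  by (simp add: vec_eq_iff matrix_matrix_mult_def sum_subtractf algebra_simps)

lemma matrix_neg_left: "(- (X::'a::ring_1^'n^'m)) ** Z = - (X ** Z)"
  by (simp add: vec_eq_iff matrix_matrix_mult_def sum_negf)

lemma transpose_diff: "transpose ((X::'a::ab_group_add^'n^'m) - Y) = transpose X - transpose Y"
  by (simp add: transpose_def vec_eq_iff)

lemma matrix_inv_left: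
  fixes S :: "'a::semiring_1^'n^'m"
  assumes "invertible S"
  shows "matrix_inv S ** S = mat 1"
  using someI_ex[OF assms[unfolded invertible_def]] by (simp add: matrix_inv_def)

lemma matrix_inv_right:
  fixes S :: "'a::semiring_1^'n^'m"
  assumes "invertible S"
  shows "S ** matrix_inv S = mat 1"
  using someI_ex[OF assms[unfolded invertible_def]] by (simp add: matrix_inv_def)

lemma matrix_inv_mat_1: "matrix_inv (mat 1 :: 'a::semiring_1^'n^'n) = mat 1"
  using matrix_inv_left[of "mat 1 :: 'a^'n^'n"] by (simp add: invertible_def)

lemma bounded_bilinear_matrix_mult:
  "bounded_bilinear ((**) :: real^'n^'m \<Rightarrow> real^'k^'n \<Rightarrow> real^'k^'m)"
  unfolding bilinear_conv_bounded_bilinear[symmetric] bilinear_def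
  by (auto intro!: linearI simp: vec_eq_iff matrix_matrix_mult_def sum_distrib_left
      algebra_simps sum.distrib)

lemma inner_matrix_mult_left:
  fixes X :: "real^'n^'m" and A :: "real^'k^'m" and K :: "real^'n^'k"
  shows "X \<bullet> (A ** K) = (transpose A ** X) \<bullet> K"
proof -
  have "X \<bullet> (A ** K) = (\<Sum>i\<in>UNIV. \<Sum>j\<in>UNIV. \<Sum>k\<in>UNIV. X$i$j * A$i$k * K$k$j)"
    by (simp add: inner_vec_def matrix_matrix_mult_def sum_distrib_left mult.assoc)
  also have "\<dots> = (\<Sum>k\<in>UNIV. \<Sum>j\<in>UNIV. \<Sum>i\<in>UNIV. X$i$j * A$i$k * K$k$j)"
    by (subst (2) sum.swap, subst sum.swap, subst (2) sum.swap) (rule refl)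
  also have "\<dots> = (transpose A ** X) \<bullet> K"
    by (simp add: inner_vec_def matrix_matrix_mult_def transpose_def sum_distrib_left sum_distrib_right mult_ac)
  finally show ?thesis .
qed

lemma inner_transpose: "transpose X \<bullet> transpose Y = (X::real^'n^'m) \<bullet> Y"
  by (simp add: inner_vec_def transpose_def) (rule sum.swap)

lemma inner_matrix_mult_right:
  fixes X :: "real^'n^'m" and K :: "real^'k^'m" and A :: "real^'n^'k"
  shows "X \<bullet> (K ** A) = (X ** transpose A) \<bullet> K"
proof -
  have "X \<bullet> (K ** A) = transpose X \<bullet> (transpose A ** transpose K)"
    by (simp add: matrix_transpose_mul inner_transpose[of X "K ** A", symmetric])
  also have "\<dots> = (A ** transpose X) \<bullet> transpose K"
    by (simp add: inner_matrix_mult_left)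
  also have "\<dots> = (X ** transpose A) \<bullet> K"
    by (simp add: matrix_transpose_mul inner_transpose[of "X ** transpose A" K, symmetric])
  finally show ?thesis .
qed

lemma norm_transpose: "norm (transpose (X::real^'n^'m)) = norm X"
  by (simp add: norm_eq_sqrt_inner inner_transpose)

lemma continuous_on_det [continuous_intros]:
  fixes f :: "'a::topological_space \<Rightarrow> real^'n^'n"
  shows "continuous_on S f \<Longrightarrow> continuous_on S (\<lambda>x. det (f x))"
  unfolding det_def by (intro continuous_intros)

lemma continuous_on_matrix_mult [continuous_intros]:
  fixes f :: "'a::topological_space \<Rightarrow> real^'n^'m" and g :: "'a \<Rightarrow> real^'k^'n"
  shows "continuous_on S f \<Longrightarrow> continuous_on S g \<Longrightarrow> continuous_on S (\<lambda>x. f x ** g x)"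
  unfolding matrix_matrix_mult_def by (intro continuous_intros)

lemma matrix_inv_cramer:
  fixes M :: "real^'n^'n"
  assumes "det M \<noteq> 0"
  shows "matrix_inv M = (\<chi> i j. det (\<chi> a b. if b = i then axis j 1 $ a else M$a$b) / det M)"
proof -
  have "invertible M" using assms invertible_det_nz by blast
  have "matrix_inv M $ i $ j = det (\<chi> a b. if b = i then axis j 1 $ a else M$a$b) / det M" for i j
  proof -
    have "M *v (matrix_inv M *v axis j 1) = axis j 1"
      by (simp add: matrix_vector_mul_assoc matrix_inv_right[OF \<open>invertible M\<close>])
    hence "matrix_inv M *v axis j 1 = (\<chi> k. det (\<chi> a b. if b = k then axis j 1 $ a else M$a$b) / det M)"
      using cramer[OF assms] by blast
    hence "(matrix_inv M *v axis j 1) $ i = det (\<chi> a b. if b = i then axis j 1 $ a else M$a$b) / det M"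
      by simp
    thus ?thesis by (simp add: matrix_vector_mult_basis column_def)
  qed
  thus ?thesis by (simp add: vec_eq_iff)
qed

lemma continuous_on_matrix_inv: "continuous_on {M::real^'n^'n. det M \<noteq> 0} matrix_inv"
proof (rule continuous_on_eq)
  have "continuous_on S (\<lambda>M::real^'n^'n. if b = i then c else M$a$b)" for S b i a and c :: real
    by (cases "b = i") (auto intro!: continuous_intros)
  then show "continuous_on {M::real^'n^'n. det M \<noteq> 0}
          (\<lambda>M. \<chi> i j. det (\<chi> a b. if b = i then axis j 1 $ a else M$a$b) / det M)"
    by (intro continuous_intros) auto
qed (simp add: matrix_inv_cramer)

lemma open_nonsingular: "open {M::real^'n^'n. det M \<noteq> 0}"
  by (intro open_Collect_neq continuous_intros)

lemma has_derivative_matrix_inv_at_mat_1: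
  "(matrix_inv has_derivative uminus) (at (mat 1 :: real^'n^'n))"
  unfolding has_derivative_at_within
proof
  let ?I = "mat 1 :: real^'n^'n"
  show "bounded_linear (uminus :: real^'n^'n \<Rightarrow> _)" by (rule bounded_linear_minus[OF bounded_linear_ident])
  obtain K where "K > 0" and K: "\<And>(a::real^'n^'n) (b::real^'n^'n). norm (a ** b) \<le> norm a * norm b * K"
    using bounded_bilinear.pos_bounded[OF bounded_bilinear_matrix_mult] by blast
  have "isCont matrix_inv ?I"
    using continuous_on_eq_continuous_at[THEN iffD1, OF open_nonsingular continuous_on_matrix_inv,
      rule_format, of ?I]
    by (simp add: det_I)
  hence "((\<lambda>y. K * norm (?I - matrix_inv y)) \<longlongrightarrow> K * norm (?I - matrix_inv ?I)) (at ?I)"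
    unfolding isCont_def by (intro tendsto_intros)
  hence "((\<lambda>y. K * norm (?I - matrix_inv y)) \<longlongrightarrow> 0) (at ?I)"
    by (simp add: matrix_inv_mat_1)
  moreover have "\<forall>\<^sub>F y in at ?I. norm ((matrix_inv y - matrix_inv ?I - - (y - ?I)) /\<^sub>R norm (y - ?I))
                                     \<le> K * norm (?I - matrix_inv y)"
  proof -
    have "\<forall>\<^sub>F y in at ?I. det y \<noteq> 0"
      using eventually_at_in_open'[OF open_nonsingular, of ?I] by (simp add: det_I)
    then show ?thesis
    proof eventually_elim
      case (elim y)
      have "matrix_inv y ** y = ?I"
        using elim by (simp add: matrix_inv_left invertible_det_nz)
      hence "matrix_inv y - matrix_inv ?I - - (y - ?I) = (?I - matrix_inv y) ** (y - ?I)"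
        by (simp add: matrix_inv_mat_1 matrix_diff_rdistrib matrix_diff_ldistrib)
      moreover have "norm ((?I - matrix_inv y) ** (y - ?I)) / norm (y - ?I) \<le> K * norm (?I - matrix_inv y)"
        using K[of "?I - matrix_inv y" "y - ?I"] \<open>K > 0\<close>
        by (cases "y = ?I") (simp_all add: pos_divide_le_eq mult_ac)
      ultimately show ?case by (simp add: divide_inverse_commute)
    qed
  qed
  ultimately show "((\<lambda>y. (matrix_inv y - matrix_inv ?I - - (y - ?I)) /\<^sub>R norm (y - ?I)) \<longlongrightarrow> 0) (at ?I)"
    by (rule Lim_null_comparison[rotated])
qed

lemma has_derivative_similarity_at_mat_1:
  fixes A :: "real^'n^'n"
  shows "((\<lambda>S. matrix_inv S ** A ** S) has_derivative (\<lambda>K. A ** K - K ** A)) (at (mat 1))"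
proof -
  have "((\<lambda>S. matrix_inv S ** A ** S) has_derivative
          (\<lambda>K. (matrix_inv (mat 1) ** A) ** K + (matrix_inv (mat 1) ** 0 + (- K) ** A) ** mat 1))
        (at (mat 1))"
    by (intro bounded_bilinear.FDERIV[OF bounded_bilinear_matrix_mult]
        has_derivative_matrix_inv_at_mat_1 has_derivative_const has_derivative_ident)
  then show ?thesis by (simp add: matrix_inv_mat_1 matrix_neg_left)
qed

lemma linear_commutator: "linear (\<lambda>K::real^'n^'n. A ** K - K ** A)"
  using bounded_bilinear.bounded_linear_left[OF bounded_bilinear_matrix_mult]
    bounded_bilinear.bounded_linear_right[OF bounded_bilinear_matrix_mult]
  by (intro linear_compose_sub bounded_linear.linear)

definition zero_part :: "real^'n^'m \<Rightarrow> real^'n^'m \<Rightarrow> real^'n^'m" where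
  "zero_part A Y = (\<chi> i j. if A$i$j = 0 then Y$i$j else 0)"

definition support_part :: "real^'n^'m \<Rightarrow> real^'n^'m \<Rightarrow> real^'n^'m" where
  "support_part A Y = (\<chi> i j. if A$i$j = 0 then 0 else Y$i$j)"

lemma linear_zero_part: "linear (zero_part A)"
  by (auto intro!: linearI simp: zero_part_def vec_eq_iff)

lemma linear_support_part: "linear (support_part A)"
  by (auto intro!: linearI simp: support_part_def vec_eq_iff)

lemma zero_part_plus_support_part: "zero_part A Y + support_part A Y = Y"
  by (auto simp: zero_part_def support_part_def vec_eq_iff)

lemma zero_part_self [simp]: "zero_part A A = 0"
  by (auto simp: zero_part_def vec_eq_iff)

lemma zero_part_zero_part [simp]: "zero_part A (zero_part A Y) = zero_part A Y"
  by (auto simp: zero_part_def vec_eq_iff)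

lemma zero_part_support_part [simp]: "zero_part A (support_part A Y) = 0"
  by (auto simp: zero_part_def support_part_def vec_eq_iff)

lemma inner_zero_part: "zero_part A X \<bullet> Y = X \<bullet> zero_part A Y"
  by (auto simp: zero_part_def inner_vec_def intro!: sum.cong)

lemma hadamard_zero_part [simp]: "hadamard A (zero_part A X) = 0"
  by (auto simp: zero_part_def hadamard_def vec_eq_iff)

lemma span_range_zero_part [simp]: "span (range (zero_part A)) = range (zero_part A)"
  by (rule span_eq_iff[THEN iffD2, OF linear_subspace_image[OF linear_zero_part subspace_UNIV]])

lemma nSSP_imp_commutator_onto_zero_part:
  fixes A :: "real^'n^'n"
  assumes "nSSP A"
  shows "range (zero_part A) \<subseteq> range (\<lambda>K. zero_part A (A ** K - K ** A))"
proof (rule ccontr)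
  define D where "D K = zero_part A (A ** K - K ** A)" for K
  assume "\<not> range (zero_part A) \<subseteq> range (\<lambda>K. zero_part A (A ** K - K ** A))"
  hence not_onto: "\<not> range (zero_part A) \<subseteq> range D" by (simp add: D_def)
  have "linear D"
    unfolding D_def using linear_compose[OF linear_commutator linear_zero_part] by (simp add: o_def)
  hence span_D: "span (range D) = range D"
    by (rule span_eq_iff[THEN iffD2, OF linear_subspace_image[OF _ subspace_UNIV]])
  have "range D \<subseteq> range (zero_part A)" by (auto simp: D_def)
  hence "span (range D) \<subset> span (range (zero_part A))"
    unfolding span_D span_range_zero_part using not_onto by blast
  then obtain X where "X \<noteq> 0" and "X \<in> span (range (zero_part A))"
    and orth_D: "\<And>Y. Y \<in> span (range D) \<Longrightarrow> orthogonal X Y"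
    by (rule orthogonal_to_subspace_exists_gen) blast
  hence X_zero_part: "zero_part A X = X" by auto
  have orth: "X \<bullet> (A ** K - K ** A) = 0" for K
  proof -
    have "X \<bullet> D K = 0" using orth_D[of "D K"] by (simp add: orthogonal_def span_base)
    thus ?thesis by (simp add: D_def flip: inner_zero_part) (simp add: X_zero_part)
  qed
  \<comment> \<open>X is orthogonal to every commutator, in particular to the one with M = [A^T, X]\<close>
  define M where "M = transpose A ** X - X ** transpose A"
  have "X \<bullet> (A ** M - M ** A) = (transpose A ** X) \<bullet> M - (X ** transpose A) \<bullet> M"
    by (simp only: inner_diff_right inner_matrix_mult_left[of X A M] inner_matrix_mult_right[of X M A])
  also have "\<dots> = M \<bullet> M" by (simp only: M_def inner_diff_left)
  finally have "M = 0" using orth[of M] by simp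
  have "A ** transpose X - transpose X ** A = - transpose M"
    by (simp add: M_def transpose_diff matrix_transpose_mul)
  hence "A ** transpose X - transpose X ** A = 0"
    using \<open>M = 0\<close> by (simp add: transpose_def vec_eq_iff)
  moreover have "hadamard A X = 0" using hadamard_zero_part[of A X] X_zero_part by simp
  ultimately show False using assms \<open>X \<noteq> 0\<close> by (auto simp: nSSP_def)
qed

lemma nSSP_commutator_right_inverse:
  fixes A :: "real^'n^'n"
  assumes "nSSP A"
  obtains h where "linear h" "\<And>Y. zero_part A (A ** h Y - h Y ** A) = zero_part A Y"
proof -
  define D where "D K = zero_part A (A ** K - K ** A)" for K
  have "linear D"
    unfolding D_def using linear_compose[OF linear_commutator linear_zero_part] by (simp add: o_def)
  moreover have "span (range (zero_part A)) \<subseteq> D ` span UNIV"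
    using nSSP_imp_commutator_onto_zero_part[OF assms] by (simp add: D_def)
  ultimately obtain g where "linear g" and g: "\<forall>Y\<in>span (range (zero_part A)). D (g Y) = Y"
    using linear_surj_right_inverse by blast
  show thesis
  proof (rule that[of "g \<circ> zero_part A"])
    show "linear (g \<circ> zero_part A)" by (rule linear_compose[OF linear_zero_part \<open>linear g\<close>])
    show "zero_part A (A ** (g \<circ> zero_part A) Y - (g \<circ> zero_part A) Y ** A) = zero_part A Y" for Y
      using g by (simp add: D_def)
  qed
qed

lemma has_derivative_similarity:
  fixes S :: "'a::real_normed_vector \<Rightarrow> real^'n^'n"
  assumes "(S has_derivative S') (at x)" and "S x = mat 1"
  shows "((\<lambda>y. matrix_inv (S y) ** A ** S y) has_derivative (\<lambda>v. A ** S' v - S' v ** A)) (at x)"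
  using has_derivative_compose[OF assms(1), of "\<lambda>S. matrix_inv S ** A ** S"]
    has_derivative_similarity_at_mat_1[of A]
  by (simp add: assms(2))

lemma zero_part_locally_onto:
  fixes \<Phi> :: "real^'n^'m \<Rightarrow> real^'n^'m"
  assumes "open U" "0 \<in> U" "continuous_on U \<Phi>" "zero_part A (\<Phi> 0) = 0"
    and "(\<Phi> has_derivative \<Phi>') (at 0)" "\<And>Y. zero_part A (\<Phi>' Y) = zero_part A Y"
    and "open T" "0 \<in> T" "T \<subseteq> U"
  obtains e where "e > 0" "\<And>Z. norm Z < e \<Longrightarrow> support_part A Z = 0 \<Longrightarrow> \<exists>Y\<in>T. zero_part A (\<Phi> Y) = Z"
proof -
  \<comment> \<open>the support part makes F a self-map of the whole space with derivative id at 0\<close>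
  define F where "F Y = zero_part A (\<Phi> Y) + support_part A Y" for Y
  have bl: "bounded_linear (zero_part A)" "bounded_linear (support_part A)"
    using linear_zero_part linear_support_part by (simp_all add: linear_conv_bounded_linear)
  have "continuous_on U F"
    unfolding F_def
    by (intro continuous_on_add linear_continuous_on_compose[OF assms(3) linear_zero_part]
        linear_continuous_on bl)
  moreover have "(F has_derivative id) (at 0)"
  proof -
    have "(F has_derivative (\<lambda>Y. zero_part A (\<Phi>' Y) + support_part A Y)) (at 0)"
      unfolding F_def
      by (intro has_derivative_add bounded_linear.has_derivative[OF bl(1) assms(5)]
          bounded_linear_imp_has_derivative bl(2))
    thus ?thesis by (simp add: assms(6) zero_part_plus_support_part id_def)
  qed
  ultimately have "F 0 \<in> interior (F ` T)"
    using assms by (intro sussmann_open_mapping[OF \<open>open U\<close> _ \<open>0 \<in> U\<close> _ bounded_linear_ident])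
      (auto simp: interior_open)
  moreover have "F 0 = 0"
    by (simp add: F_def assms(4) linear_0[OF linear_support_part])
  ultimately obtain e where "e > 0" and e: "ball 0 e \<subseteq> F ` T"
    using mem_interior by metis
  show thesis
  proof (rule that[OF \<open>e > 0\<close>])
    fix Z :: "real^'n^'m" assume "norm Z < e" "support_part A Z = 0"
    then obtain Y where "Y \<in> T" "F Y = Z" using e by auto
    have "zero_part A Z = Z" using zero_part_plus_support_part[of A Z] \<open>support_part A Z = 0\<close> by simp
    moreover have "zero_part A (F Y) = zero_part A (\<Phi> Y)"
      by (simp add: F_def linear_add[OF linear_zero_part])
    ultimately show "\<exists>Y\<in>T. zero_part A (\<Phi> Y) = Z" using \<open>Y \<in> T\<close> \<open>F Y = Z\<close> by auto
  qed
qed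

lemma nSSP_similar_with_prescribed_zero_part:
  fixes A :: "real^'n^'n"
  assumes "nSSP A" and "eventually Q (nhds A)"
  obtains e where "e > 0"
    "\<And>Z. norm Z < e \<Longrightarrow> support_part A Z = 0 \<Longrightarrow>
       \<exists>S. invertible S \<and> Q (matrix_inv S ** A ** S) \<and> zero_part A (matrix_inv S ** A ** S) = Z"
proof -
  obtain h where "linear h" and h: "\<And>Y. zero_part A (A ** h Y - h Y ** A) = zero_part A Y"
    using nSSP_commutator_right_inverse[OF assms(1)] by blast
  have "bounded_linear h" using \<open>linear h\<close> by (simp add: linear_conv_bounded_linear)
  have "h 0 = 0" using \<open>linear h\<close> by (rule linear_0)
  define \<Phi> where "\<Phi> Y = matrix_inv (mat 1 + h Y) ** A ** (mat 1 + h Y)" for Y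
  define U where "U = {Y. det (mat 1 + h Y) \<noteq> 0}"
  have cont_shift: "continuous_on UNIV (\<lambda>Y. mat 1 + h Y)"
    by (intro continuous_intros linear_continuous_on \<open>bounded_linear h\<close>)
  have "open U"
    unfolding U_def by (intro open_Collect_neq continuous_intros cont_shift)
  have "0 \<in> U" by (simp add: U_def \<open>h 0 = 0\<close> det_I)
  have "continuous_on U \<Phi>"
    unfolding \<Phi>_def U_def
    by (intro continuous_intros continuous_on_compose2[OF continuous_on_matrix_inv]
        continuous_on_subset[OF cont_shift]) auto
  have "\<Phi> 0 = A" by (simp add: \<Phi>_def \<open>h 0 = 0\<close> matrix_inv_mat_1)
  have d\<Phi>: "(\<Phi> has_derivative (\<lambda>Y. A ** h Y - h Y ** A)) (at 0)"
    unfolding \<Phi>_def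
    by (rule has_derivative_similarity)
      (use has_derivative_add[OF has_derivative_const bounded_linear_imp_has_derivative[OF \<open>bounded_linear h\<close>]]
        in \<open>simp_all add: \<open>h 0 = 0\<close>\<close>)
  have "\<forall>\<^sub>F Y in nhds 0. Y \<in> U" using \<open>open U\<close> \<open>0 \<in> U\<close> by (rule eventually_nhds_in_open)
  moreover have "(\<Phi> \<longlongrightarrow> \<Phi> 0) (nhds 0)"
    using has_derivative_continuous[OF d\<Phi>] by (simp add: isCont_def tendsto_at_iff_tendsto_nhds)
  hence "\<forall>\<^sub>F Y in nhds 0. Q (\<Phi> Y)"
    using assms(2) \<open>\<Phi> 0 = A\<close> by (simp add: eventually_compose_filterlim)
  ultimately have "\<forall>\<^sub>F Y in nhds 0. Y \<in> U \<and> Q (\<Phi> Y)" by (rule eventually_conj)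
  then obtain T where "open T" "0 \<in> T" and T: "\<forall>Y\<in>T. Y \<in> U \<and> Q (\<Phi> Y)"
    unfolding eventually_nhds by blast
  hence "T \<subseteq> U" by blast
  have "zero_part A (\<Phi> 0) = 0" by (simp add: \<open>\<Phi> 0 = A\<close>)
  obtain e where "e > 0"
    and e: "\<And>Z. norm Z < e \<Longrightarrow> support_part A Z = 0 \<Longrightarrow> \<exists>Y\<in>T. zero_part A (\<Phi> Y) = Z"
    by (rule zero_part_locally_onto[OF \<open>open U\<close> \<open>0 \<in> U\<close> \<open>continuous_on U \<Phi>\<close>
          \<open>zero_part A (\<Phi> 0) = 0\<close> d\<Phi> h \<open>open T\<close> \<open>0 \<in> T\<close> \<open>T \<subseteq> U\<close>]) blast
  show thesis
  proof (rule that[OF \<open>e > 0\<close>])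
    fix Z :: "real^'n^'n" assume "norm Z < e" "support_part A Z = 0"
    then obtain Y where "Y \<in> T" "zero_part A (\<Phi> Y) = Z" using e by blast
    moreover have "invertible (mat 1 + h Y)" using T \<open>Y \<in> T\<close> by (simp add: U_def invertible_det_nz)
    ultimately show "\<exists>S. invertible S \<and> Q (matrix_inv S ** A ** S) \<and> zero_part A (matrix_inv S ** A ** S) = Z"
      using T \<open>Y \<in> T\<close> unfolding \<Phi>_def by blast
  qed
qed

lemma nSSP_similar_with_zero_part_multiple:
  fixes A :: "real^'n^'n"
  assumes "nSSP A" and "eventually Q (nhds A)" and "support_part A Y = 0"
  obtains t S where "t > 0" "invertible S" "Q (matrix_inv S ** A ** S)"
    "zero_part A (matrix_inv S ** A ** S) = t *\<^sub>R Y"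
proof -
  obtain e where "e > 0" and e: "\<And>Z. norm Z < e \<Longrightarrow> support_part A Z = 0 \<Longrightarrow>
      \<exists>S. invertible S \<and> Q (matrix_inv S ** A ** S) \<and> zero_part A (matrix_inv S ** A ** S) = Z"
    by (rule nSSP_similar_with_prescribed_zero_part[OF assms(1,2)]) blast
  define t where "t = e / (norm Y + 1)"
  have "norm Y + 1 > 0" by (simp add: add_nonneg_pos)
  hence "t > 0" using \<open>e > 0\<close> by (simp add: t_def)
  have "norm (t *\<^sub>R Y) = t * norm Y" using \<open>t > 0\<close> by simp
  also have "\<dots> < t * (norm Y + 1)" using \<open>t > 0\<close> by simp
  also have "\<dots> = e" using \<open>norm Y + 1 > 0\<close> by (simp add: t_def)
  finally have "norm (t *\<^sub>R Y) < e" .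
  moreover have "support_part A (t *\<^sub>R Y) = 0"
    using assms(3) by (simp add: linear_cmul[OF linear_support_part[of A]])
  ultimately show thesis using e that[OF \<open>t > 0\<close>] by blast
qed

lemma eventually_nhds_nSSP:
  fixes A :: "real^'n^'n"
  assumes "nSSP A"
  shows "\<forall>\<^sub>F B in nhds A. (\<forall>i j. A$i$j \<noteq> 0 \<longrightarrow> B$i$j \<noteq> 0) \<longrightarrow> nSSP B"
proof -
  define T where "T X = (A ** transpose X - transpose X ** A, hadamard A X)" for X :: "real^'n^'n"
  have "linear T"
    unfolding T_def
    by (auto intro!: linearI simp: vec_eq_iff transpose_def matrix_matrix_mult_def hadamard_def
        sum.distrib sum_distrib_left algebra_simps)
  moreover have "inj T"
  proof (rule linear_injective_0[OF \<open>linear T\<close>, THEN iffD2], intro allI impI)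
    fix X assume "T X = 0"
    thus "X = 0" using assms by (simp add: T_def nSSP_def zero_prod_def)
  qed
  ultimately obtain c where "c > 0" and c: "\<And>X. c * norm X \<le> norm (T X)"
    by (rule linear_inj_bounded_below_pos) blast
  obtain K where "K > 0" and K: "\<And>(a::real^'n^'n) (b::real^'n^'n). norm (a ** b) \<le> norm a * norm b * K"
    using bounded_bilinear.pos_bounded[OF bounded_bilinear_matrix_mult] by blast
  have "nSSP B" if "dist B A < c / (2 * K)" and supp: "\<forall>i j. A$i$j \<noteq> 0 \<longrightarrow> B$i$j \<noteq> 0" for B
    unfolding nSSP_def
  proof (intro allI impI)
    fix X :: "real^'n^'n"
    assume X: "hadamard B X = 0 \<and> B ** transpose X - transpose X ** B = 0"
    have "hadamard A X = 0"
      using X supp by (auto simp: hadamard_def vec_eq_iff)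
    hence "c * norm X \<le> norm (A ** transpose X - transpose X ** A)"
      using c[of X] by (simp add: T_def)
    also have "A ** transpose X - transpose X ** A = transpose X ** (B - A) - (B - A) ** transpose X"
      using X by (simp add: matrix_diff_ldistrib matrix_diff_rdistrib algebra_simps)
    also have "norm \<dots> \<le> norm (transpose X ** (B - A)) + norm ((B - A) ** transpose X)"
      by (rule norm_triangle_ineq4)
    also have "\<dots> \<le> 2 * K * norm (B - A) * norm X"
      using K[of "transpose X" "B - A"] K[of "B - A" "transpose X"] by (simp add: norm_transpose algebra_simps)
    finally have "c * norm X \<le> 2 * K * norm (B - A) * norm X" .
    moreover have "2 * K * norm (B - A) < c"
      using \<open>dist B A < c / (2 * K)\<close> \<open>K > 0\<close> by (simp add: dist_norm field_simps)
    ultimately have "\<not> 0 < norm X" by (auto simp: mult_le_cancel_right)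
    thus "X = 0" by simp
  qed
  thus ?thesis
    using \<open>c > 0\<close> \<open>K > 0\<close> by (auto simp: eventually_nhds_metric intro!: exI[of _ "c / (2 * K)"])
qed

lemma has_sign_zero_iff: "has_sign x s \<Longrightarrow> x = 0 \<longleftrightarrow> s = SZero"
  by (cases s) (auto simp: has_sign_def)

lemma eventually_has_sign:
  assumes "(f \<longlongrightarrow> x) F" and "has_sign x s" and "x \<noteq> 0"
  shows "\<forall>\<^sub>F y in F. has_sign (f y) s"
  using assms by (cases s) (auto simp: has_sign_def intro: order_tendstoD)

lemma eventually_nhds_nonzero_signs:
  fixes A :: "real^'n^'n"
  assumes "A \<in> qual_class P"
  shows "\<forall>\<^sub>F B in nhds A. \<forall>i j. A$i$j \<noteq> 0 \<longrightarrow> has_sign (B$i$j) (P i j)"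
proof (intro eventually_all_finite)
  fix i j
  have "((\<lambda>B. B$i$j) \<longlongrightarrow> A$i$j) (nhds A)"
    by (intro tendsto_vec_nth filterlim_ident)
  thus "\<forall>\<^sub>F B in nhds A. A$i$j \<noteq> 0 \<longrightarrow> has_sign (B$i$j) (P i j)"
    using assms by (cases "A$i$j = 0") (auto simp: qual_class_def intro: eventually_has_sign)
qed

fun real_of_sgn_entry :: "sgn_entry \<Rightarrow> real" where
  "real_of_sgn_entry SPos = 1"
| "real_of_sgn_entry SNeg = -1"
| "real_of_sgn_entry SZero = 0"

lemma has_sign_real_of_sgn_entry: "t > 0 \<Longrightarrow> has_sign (t * real_of_sgn_entry s) s"
  by (cases s) (auto simp: has_sign_def)

lemma superpattern_qual_classI:
  fixes A B :: "real^'n^'n"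
  assumes "A \<in> qual_class P" and "superpattern P' P" and "t > 0"
    and "\<And>i j. A$i$j \<noteq> 0 \<Longrightarrow> has_sign (B$i$j) (P i j)"
    and "\<And>i j. A$i$j = 0 \<Longrightarrow> B$i$j = t * real_of_sgn_entry (P' i j)"
  shows "B \<in> qual_class P'"
  unfolding qual_class_def
proof (intro CollectI allI)
  fix i j
  show "has_sign (B$i$j) (P' i j)"
  proof (cases "A$i$j = 0")
    case True
    thus ?thesis using assms(3,5) has_sign_real_of_sgn_entry by simp
  next
    case False
    hence "P' i j = P i j"
      using assms(1,2) has_sign_zero_iff[of "A$i$j" "P i j"] by (auto simp: qual_class_def superpattern_def)
    thus ?thesis using assms(4) False by simp
  qed
qed

theorem theorem5p3:
  fixes P :: "('n::finite) sign_pattern" and A :: "real^'n^'n"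
  assumes "A \<in> qual_class P" and "nSSP A"
  shows "\<forall>P'. superpattern P' P \<longrightarrow>
           (\<exists>A'. A' \<in> qual_class P' \<and> similar_matrix A' A \<and> nSSP A')"
proof (intro allI impI)
  fix P' assume "superpattern P' P"
  have near: "\<forall>\<^sub>F B in nhds A. (\<forall>i j. A$i$j \<noteq> 0 \<longrightarrow> has_sign (B$i$j) (P i j)) \<and> nSSP B"
    using eventually_nhds_nonzero_signs[OF assms(1)] eventually_nhds_nSSP[OF assms(2)]
    by eventually_elim (use assms(1) has_sign_zero_iff in \<open>fastforce simp: qual_class_def\<close>)
  define Y where "Y = (\<chi> i j. if A$i$j = 0 then real_of_sgn_entry (P' i j) else 0)"
  have "support_part A Y = 0" by (simp add: support_part_def Y_def vec_eq_iff)
  then obtain t S where "t > 0" "invertible S"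
    and A': "(\<forall>i j. A$i$j \<noteq> 0 \<longrightarrow> has_sign ((matrix_inv S ** A ** S)$i$j) (P i j))
        \<and> nSSP (matrix_inv S ** A ** S)"
    and zeros: "zero_part A (matrix_inv S ** A ** S) = t *\<^sub>R Y"
    by (rule nSSP_similar_with_zero_part_multiple[OF assms(2) near])
  have "(matrix_inv S ** A ** S)$i$j = t * real_of_sgn_entry (P' i j)" if "A$i$j = 0" for i j
    using arg_cong[OF zeros, of "\<lambda>M. M$i$j"] that by (simp add: zero_part_def Y_def)
  hence "matrix_inv S ** A ** S \<in> qual_class P'"
    using A' by (intro superpattern_qual_classI[OF assms(1) \<open>superpattern P' P\<close> \<open>t > 0\<close>]) auto
  moreover have "similar_matrix (matrix_inv S ** A ** S) A"
    using \<open>invertible S\<close> by (auto simp: similar_matrix_def)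
  ultimately show "\<exists>A'. A' \<in> qual_class P' \<and> similar_matrix A' A \<and> nSSP A'"
    using A' by blast
qed

end
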